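(* Let $f\colon V_0\to\mathbb{R}$ be continuous such that $\Gamma_f$ is a ruled surface. Then there are $u\in[0,\infty]$ and $\theta\in\mathbb{R}$ such that $s_{t,t}^{-1}(\Gamma_f^+)\to\mathrm{rot}_\theta(\mathrm{BP}_u^+)$ locally as $t\to\infty$. Furthermore, if $u=0$, then $\Gamma_f$ is a vertical plane, i.e., $\Gamma_f=\{(x,y,z):ax+by=c\}$ for some $(a,b)\neq(0,0)$, $c\in\mathbb{R}$.
   Context: $\mathbb{H}$ is $\mathbb{R}^3$ with product $(x,y,z)\cdot(x',y',z')=(x+x',y+y',z+z'+\frac{xy'-yx'}{2})$; $Y^t=(0,t,0)$. A horizontal line is a set $\{p\cdot tv:t\in\mathbb{R}\}$ with $v=(a,b,0)\neq0$; a ruled surface is a union of horizontal line segments (rulings) with endpoints in its boundary. $V_0=\{(x,0,z)\}$; $\Gamma_f=\{u\cdot Y^{f(u)}\}$, $\Gamma_f^+=\{u\cdot Y^s:s>f(u)\}$. $s_{t,t}(x,y,z)=(tx,ty,t^2z)$; $\mathrm{rot}_\theta$ is rotation by $\theta$ about the $z$-axis, $(x,y,z)\mapsto(x\cos\theta-y\sin\theta,x\sin\theta+y\cos\theta,z)$. For $0\le u<\infty$, $\mathrm{BP}_u^+=\Gamma_{b_u}^+$ where $b_u(x,0,z)=ux$ if $z<-\frac u2x^2$, $b_u(x,0,z)=-\frac{2z}{x}$ if $|z|\le\frac u2x^2$, $b_u(x,0,z)=-ux$ if $z>\frac u2 x^2$ (for $u=0$, $b_0\equiv0$); and $\mathrm{BP}_\infty^+=\{(x,y,z):xz>0\}$.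 Local convergence $G_t\to G$ means that for every compact $C$, the Lebesgue measure of $(G_t\triangle G)\cap C$ tends to $0$. *)

theory Defs
  imports "HOL-Analysis.Analysis"
begin

type_synonym heis = "real \<times> real \<times> real"

definition hmult :: "heis \<Rightarrow> heis \<Rightarrow> heis" where
  "hmult p q = (case p of (x, y, z) \<Rightarrow> case q of (x', y', z') \<Rightarrow>
      (x + x', y + y', z + z' + (x * y' - y * x') / 2))"

definition Yt :: "real \<Rightarrow> heis" where
  "Yt t = (0, t, 0)"

definition hline :: "heis \<Rightarrow> real \<Rightarrow> real \<Rightarrow> heis set" where
  "hline p a b = {hmult p (t * a, t * b, 0) | t. t \<in> (UNIV :: real set)}"

text \<open>A ruled surface without boundary (such as an entire intrinsic graph):
  every point lies on a ruling, which, having its endpoints in the (empty)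
  boundary, is a full horizontal line contained in the surface.\<close>
definition ruled_surface :: "heis set \<Rightarrow> bool" where
  "ruled_surface S \<longleftrightarrow> (\<forall>p\<in>S. \<exists>a b. (a, b) \<noteq> (0, 0) \<and> hline p a b \<subseteq> S)"

text \<open>Functions on V_0 = {(x,0,z)} are represented as f x z.\<close>
definition graph_Y :: "(real \<Rightarrow> real \<Rightarrow> real) \<Rightarrow> heis set" where
  "graph_Y f = {hmult (x, 0, z) (Yt (f x z)) | x z. True}"

definition epi_Y :: "(real \<Rightarrow> real \<Rightarrow> real) \<Rightarrow> heis set" where
  "epi_Y f = {hmult (x, 0, z) (Yt s) | x z s. s > f x z}"

definition sdil :: "real \<Rightarrow> heis \<Rightarrow> heis" where
  "sdil t p = (case p of (x, y, z) \<Rightarrow> (t * x, t * y, t\<^sup>2 * z))"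

definition rot :: "real \<Rightarrow> heis \<Rightarrow> heis" where
  "rot \<theta> p = (case p of (x, y, z) \<Rightarrow>
      (x * cos \<theta> - y * sin \<theta>, x * sin \<theta> + y * cos \<theta>, z))"

definition bfun :: "real \<Rightarrow> real \<Rightarrow> real \<Rightarrow> real" where
  "bfun u x z = (if u = 0 then 0
     else if z < - (u / 2) * x\<^sup>2 then u * x
     else if \<bar>z\<bar> \<le> (u / 2) * x\<^sup>2 then - 2 * z / x
     else - u * x)"

definition BP :: "ereal \<Rightarrow> heis set" where
  "BP u = (if u = \<infinity> then {(x, y, z). x * z > 0} else epi_Y (bfun (real_of_ereal u)))"

definition local_conv :: "(real \<Rightarrow> heis set) \<Rightarrow> heis set \<Rightarrow> bool" where
  "local_conv G H \<longleftrightarrow> (\<forall>C. compact C \<longrightarrow>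
      ((\<lambda>t. emeasure lborel (((G t - H) \<union> (H - G t)) \<inter> C)) \<longlongrightarrow> 0) at_top)"

end

theory Submission
  imports Defs "HOL-Library.Quadratic_Discriminant"
begin

text \<open>In the coordinates \<open>(x, z)\<close> of \<open>V\<^sub>0\<close> the rulings of \<open>\<Gamma>\<^sub>f\<close> become parabolas along which
  \<open>f\<close> is affine in \<open>x\<close>. Two rulings cannot cross: at a crossing point they would carry the
  same value of \<open>f\<close>, which forces them to be tangent there. So the rulings are ordered by
  their intercepts \<open>c\<close> with \<open>x = 0\<close>, their slopes decrease in \<open>c\<close>, and
  \<open>(f 0 c\<^sub>2 - f 0 c\<^sub>1)\<^sup>2 \<le> 2 (b\<^sub>1 - b\<^sub>2) (c\<^sub>2 - c\<^sub>1)\<close>. Comparing the ruling through the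
  dilated point \<open>(t x, t\<^sup>2 z)\<close> with fixed rulings shows that \<open>f (t x) (t\<^sup>2 z) / t\<close> tends to
  \<open>x\<close> times \<open>-2 z / x\<^sup>2\<close> clamped to \<open>[inf S, sup S]\<close>, where \<open>S\<close> is the set of slopes.
  Off a null set the dilated epigraphs therefore converge to the union of two half-spaces, one
  below and one above \<open>w = 0\<close>, bounded by the vertical planes at angles \<open>arctan (sup S)\<close> and
  \<open>arctan (inf S)\<close>; the rotation by the mean of the two angles turns this set into \<open>BP u\<close>,
  with \<open>u\<close> the tangent of half their difference. If \<open>u = 0\<close>, all rulings have the same slope,
  so \<open>f\<close> is affine in \<open>x\<close> and independent of \<open>z\<close>, and \<open>\<Gamma>\<^sub>f\<close> is a vertical plane.\<close>

lemma quadratic_nonneg_discrim: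
  fixes a b c :: real
  assumes nonneg: "\<And>x. 0 \<le> a * x\<^sup>2 + b * x + c"
  shows "0 \<le> a \<and> discrim a b c \<le> 0"
proof -
  have "0 \<le> a"
  proof (rule ccontr)
    assume "\<not> 0 \<le> a"
    define x where "x = sqrt ((\<bar>c\<bar> + 1) / - a)"
    have "x\<^sup>2 = (\<bar>c\<bar> + 1) / - a"
      using \<open>\<not> 0 \<le> a\<close> by (simp add: x_def divide_nonneg_neg)
    then have "a * x\<^sup>2 = - (\<bar>c\<bar> + 1)"
      using \<open>\<not> 0 \<le> a\<close> by simp
    then show False
      using nonneg[of x] nonneg[of "- x"] by simp
  qed
  moreover have "discrim a b c \<le> 0"
  proof (cases "a = 0")
    case True
    have "b = 0"
    proof (rule ccontr)
      assume "b \<noteq> 0"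
      then show False
        using nonneg[of "- (\<bar>c\<bar> + 1) / b"] True by simp
    qed
    with True show ?thesis
      by (simp add: discrim_def)
  next
    case False
    have "4 * a * (a * (- b / (2 * a))\<^sup>2 + b * (- b / (2 * a)) + c) = - discrim a b c"
      using False by (simp add: discrim_def power2_eq_square field_simps)
    then show ?thesis
      using nonneg[of "- b / (2 * a)"] \<open>0 \<le> a\<close> by (metis mult_nonneg_nonneg neg_0_le_iff_le
          mult_le_0_iff zero_le_numeral)
  qed
  ultimately show ?thesis ..
qed

lemma eventually_quadratic_dominates:
  fixes m A B :: real
  assumes "m > 0"
  shows "eventually (\<lambda>t. A * t + B < m * t\<^sup>2) at_top"
proof -
  have "eventually (\<lambda>t. max 1 ((\<bar>A\<bar> + \<bar>B\<bar>) / m + 1) \<le> t) at_top"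
    by (rule eventually_ge_at_top)
  then show ?thesis
  proof eventually_elim
    case (elim t)
    then have "1 \<le> t" and "(\<bar>A\<bar> + \<bar>B\<bar>) / m < t"
      by auto
    with assms have "\<bar>A\<bar> + \<bar>B\<bar> < m * t"
      by (simp add: field_simps)
    have "A * t \<le> \<bar>A\<bar> * t" and "B \<le> \<bar>B\<bar> * t"
      using \<open>1 \<le> t\<close> mult_left_mono[of 1 t "\<bar>B\<bar>"] by (auto intro: mult_right_mono)
    moreover have "(\<bar>A\<bar> + \<bar>B\<bar>) * t < m * t * t"
      using \<open>1 \<le> t\<close> \<open>\<bar>A\<bar> + \<bar>B\<bar> < m * t\<close> by (intro mult_strict_right_mono) auto
    ultimately show ?case
      by (simp add: power2_eq_square mult.assoc distrib_right)
  qed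
qed

lemma tendsto_div_at_top_if_bounded:
  fixes g :: "real \<Rightarrow> real"
  assumes "eventually (\<lambda>t. \<bar>g t\<bar> \<le> M) at_top"
  shows "((\<lambda>t. g t / t) \<longlongrightarrow> 0) at_top"
proof (rule tendsto_0_le[of "\<lambda>t. 1 / t" _ _ M])
  show "((\<lambda>t::real. 1 / t) \<longlongrightarrow> 0) at_top"
    by (rule real_tendsto_divide_at_top[OF tendsto_const filterlim_ident])
  show "eventually (\<lambda>t. norm (g t / t) \<le> norm (1 / t) * M) at_top"
    using assms eventually_gt_at_top[of 0]
    by eventually_elim (auto simp: abs_divide intro: divide_right_mono)
qed

lemma abs_less_if_sq_le:
  fixes u e A B \<epsilon> :: real
  assumes sq: "u\<^sup>2 \<le> e * (A + B * \<bar>u\<bar>)" and "e * B \<le> \<epsilon> / 2" and "e * A < \<epsilon>\<^sup>2 / 2" and "0 < \<epsilon>"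
  shows "\<bar>u\<bar> < \<epsilon>"
proof (rule ccontr)
  assume "\<not> \<bar>u\<bar> < \<epsilon>"
  then have "\<epsilon> \<le> \<bar>u\<bar>"
    by simp
  have "e * B * \<bar>u\<bar> \<le> \<epsilon> / 2 * \<bar>u\<bar>"
    using \<open>e * B \<le> \<epsilon> / 2\<close> by (rule mult_right_mono) simp
  also have "\<dots> \<le> \<bar>u\<bar> / 2 * \<bar>u\<bar>"
    using \<open>\<epsilon> \<le> \<bar>u\<bar>\<close> by (intro mult_right_mono) auto
  finally have "e * B * \<bar>u\<bar> \<le> u\<^sup>2 / 2"
    by (simp add: power2_eq_square)
  moreover have "\<epsilon>\<^sup>2 \<le> u\<^sup>2"
    using \<open>\<epsilon> \<le> \<bar>u\<bar>\<close> \<open>0 < \<epsilon>\<close> power_mono[of \<epsilon> "\<bar>u\<bar>" 2] by simp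
  ultimately show False
    using sq \<open>e * A < \<epsilon>\<^sup>2 / 2\<close> by (simp add: algebra_simps)
qed

lemma tendsto_zero_if_sq_bound:
  fixes g :: "'a \<Rightarrow> real"
  assumes "0 \<le> A" "0 \<le> B"
    and bound: "\<And>e. e > 0 \<Longrightarrow> eventually (\<lambda>t. (g t)\<^sup>2 \<le> e * (A + B * \<bar>g t\<bar>)) F"
  shows "(g \<longlongrightarrow> 0) F"
  unfolding tendsto_iff dist_real_def
proof (intro allI impI)
  fix \<epsilon> :: real
  assume "\<epsilon> > 0"
  define e where "e = min (\<epsilon> / (2 * (B + 1))) (\<epsilon>\<^sup>2 / (2 * (A + 1)))"
  have "e > 0"
    using \<open>\<epsilon> > 0\<close> assms by (simp add: e_def)
  have "e * B \<le> \<epsilon> / (2 * (B + 1)) * (B + 1)"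
    using \<open>e > 0\<close> \<open>\<epsilon> > 0\<close> assms by (intro mult_mono) (auto simp: e_def)
  also have "\<dots> = \<epsilon> / 2"
    using assms by (simp add: field_simps)
  finally have "e * B \<le> \<epsilon> / 2" .
  have "e * A \<le> \<epsilon>\<^sup>2 / (2 * (A + 1)) * A"
    using assms by (intro mult_right_mono) (auto simp: e_def)
  also have "\<dots> < \<epsilon>\<^sup>2 / 2"
    using \<open>\<epsilon> > 0\<close> assms by (simp add: field_simps)
  finally have "e * A < \<epsilon>\<^sup>2 / 2" .
  show "eventually (\<lambda>t. \<bar>g t - 0\<bar> < \<epsilon>) F"
    using bound[OF \<open>e > 0\<close>]
    by (rule eventually_mono)
      (use abs_less_if_sq_le \<open>e * B \<le> \<epsilon> / 2\<close> \<open>e * A < \<epsilon>\<^sup>2 / 2\<close> \<open>\<epsilon> > 0\<close> in simp)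
qed

lemma eventually_less_iff_if_tendsto:
  fixes g :: "'a \<Rightarrow> real"
  assumes "(g \<longlongrightarrow> L) F" and "y \<noteq> L"
  shows "eventually (\<lambda>t. g t < y \<longleftrightarrow> L < y) F"
proof (cases "L < y")
  case True
  show ?thesis
    using order_tendstoD(2)[OF assms(1) True] by eventually_elim (use True in simp)
next
  case False
  with assms have "y < L"
    by simp
  show ?thesis
    using order_tendstoD(1)[OF assms(1) \<open>y < L\<close>] by eventually_elim (use \<open>y < L\<close> in simp)
qed

lemma ex_greater_if_less_Sup:
  fixes S :: "real set"
  assumes "S \<noteq> {}" and "bdd_above S \<Longrightarrow> a < Sup S"
  shows "\<exists>b\<in>S. a < b"
  using assms less_cSup_iff[of S a] unfolding bdd_above_def by (metis not_le)

lemma ex_less_if_Inf_less: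
  fixes S :: "real set"
  assumes "S \<noteq> {}" and "bdd_below S \<Longrightarrow> Inf S < a"
  shows "\<exists>b\<in>S. b < a"
  using assms cInf_less_iff[of S a] unfolding bdd_below_def by (metis not_le)

section \<open>Rulings of an intrinsic graph\<close>

lemma hmult_Yt: "hmult (x, 0, z) (Yt s) = (x, s, z + x * s / 2)"
  by (simp add: hmult_def Yt_def)

lemma graph_Y_eq: "graph_Y f = {(x, y, w). y = f x (w - x * y / 2)}"
proof (intro set_eqI iffI)
  fix p :: heis
  assume "p \<in> {(x, y, w). y = f x (w - x * y / 2)}"
  then obtain x y w where "p = (x, y, w)" "y = f x (w - x * y / 2)"
    by auto
  then have "p = hmult (x, 0, w - x * y / 2) (Yt (f x (w - x * y / 2)))"
    by (simp add: hmult_Yt)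
  then show "p \<in> graph_Y f"
    unfolding graph_Y_def by blast
qed (auto simp: graph_Y_def hmult_Yt)

lemma epi_Y_eq: "epi_Y f = {(x, y, w). y > f x (w - x * y / 2)}"
proof (intro set_eqI iffI)
  fix p :: heis
  assume "p \<in> {(x, y, w). y > f x (w - x * y / 2)}"
  then obtain x y w where "p = (x, y, w)" "y > f x (w - x * y / 2)"
    by auto
  moreover have "(x, y, w) = hmult (x, 0, w - x * y / 2) (Yt y)"
    by (simp add: hmult_Yt)
  ultimately show "p \<in> epi_Y f"
    unfolding epi_Y_def by blast
qed (auto simp: epi_Y_def hmult_Yt)

text \<open>In the coordinates \<open>(x, z)\<close> of \<open>V\<^sub>0\<close>, the horizontal line through the graph point over
  \<open>(x\<^sub>0, z\<^sub>0)\<close> with direction \<open>(1, b, 0)\<close> lies over the parabola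
  \<open>s \<mapsto> (x\<^sub>0 + s, z\<^sub>0 - f x\<^sub>0 z\<^sub>0 * s - b * s\<^sup>2 / 2)\<close>, along which \<open>f\<close> grows with slope \<open>b\<close>.\<close>
definition ruled_fun :: "(real \<Rightarrow> real \<Rightarrow> real) \<Rightarrow> bool" where
  "ruled_fun f \<longleftrightarrow>
     (\<forall>x\<^sub>0 z\<^sub>0. \<exists>b. \<forall>s. f (x\<^sub>0 + s) (z\<^sub>0 - f x\<^sub>0 z\<^sub>0 * s - b * s\<^sup>2 / 2) = f x\<^sub>0 z\<^sub>0 + b * s)"

lemma ruled_fun_graph:
  assumes "ruled_surface (graph_Y f)"
  shows "ruled_fun f"
  unfolding ruled_fun_def
proof (intro allI)
  fix x\<^sub>0 z\<^sub>0
  define y\<^sub>0 where "y\<^sub>0 = f x\<^sub>0 z\<^sub>0"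
  define p where "p = (x\<^sub>0, y\<^sub>0, z\<^sub>0 + x\<^sub>0 * y\<^sub>0 / 2)"
  have "p \<in> graph_Y f"
    by (simp add: graph_Y_eq p_def y\<^sub>0_def)
  with assms obtain a b where ab: "(a, b) \<noteq> (0, 0)" and line: "hline p a b \<subseteq> graph_Y f"
    unfolding ruled_surface_def by blast
  have on_line: "f (x\<^sub>0 + t * a) (z\<^sub>0 - y\<^sub>0 * (t * a) - b / a * (t * a)\<^sup>2 / 2) = y\<^sub>0 + t * b"
    if "a \<noteq> 0" for t
  proof -
    have "hmult p (t * a, t * b, 0) \<in> graph_Y f"
      using line unfolding hline_def by blast
    moreover have "z\<^sub>0 + x\<^sub>0 * y\<^sub>0 / 2 + (x\<^sub>0 * (t * b) - y\<^sub>0 * (t * a)) / 2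
        - (x\<^sub>0 + t * a) * (y\<^sub>0 + t * b) / 2 = z\<^sub>0 - y\<^sub>0 * (t * a) - b / a * (t * a)\<^sup>2 / 2"
      using that by (simp add: field_simps power2_eq_square)
    ultimately show ?thesis
      by (simp add: graph_Y_eq hmult_def p_def)
  qed
  text \<open>A ruling cannot point in the direction of \<open>Y\<close>, since the graph meets every coset
    \<open>p \<cdot> Y\<^sup>t\<close> only once.\<close>
  have "a \<noteq> 0"
  proof
    assume "a = 0"
    have "hmult p (1 * a, 1 * b, 0) \<in> graph_Y f"
      using line unfolding hline_def by blast
    moreover have "hmult p (1 * a, 1 * b, 0) = (x\<^sub>0, y\<^sub>0 + b, z\<^sub>0 + x\<^sub>0 * (y\<^sub>0 + b) / 2)"
      using \<open>a = 0\<close> by (simp add: hmult_def p_def field_simps)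
    ultimately show False
      using \<open>a = 0\<close> ab by (simp add: graph_Y_eq y\<^sub>0_def)
  qed
  show "\<exists>b. \<forall>s. f (x\<^sub>0 + s) (z\<^sub>0 - f x\<^sub>0 z\<^sub>0 * s - b * s\<^sup>2 / 2) = f x\<^sub>0 z\<^sub>0 + b * s"
  proof (intro exI allI)
    fix s
    show "f (x\<^sub>0 + s) (z\<^sub>0 - f x\<^sub>0 z\<^sub>0 * s - b / a * s\<^sup>2 / 2) = f x\<^sub>0 z\<^sub>0 + b / a * s"
      using on_line[OF \<open>a \<noteq> 0\<close>, of "s / a"] \<open>a \<noteq> 0\<close> by (simp add: y\<^sub>0_def)
  qed
qed

definition ruling_z :: "(real \<Rightarrow> real \<Rightarrow> real) \<Rightarrow> real \<Rightarrow> real \<Rightarrow> real \<Rightarrow> real" where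
  "ruling_z f c b x = c - f 0 c * x - b * x\<^sup>2 / 2"

definition is_ruling :: "(real \<Rightarrow> real \<Rightarrow> real) \<Rightarrow> real \<Rightarrow> real \<Rightarrow> bool" where
  "is_ruling f c b \<longleftrightarrow> (\<forall>x. f x (ruling_z f c b x) = f 0 c + b * x)"

definition ruling_slopes :: "(real \<Rightarrow> real \<Rightarrow> real) \<Rightarrow> real set" where
  "ruling_slopes f = {b. \<exists>c. is_ruling f c b}"

lemma is_ruling_value: "is_ruling f c b \<Longrightarrow> f x (ruling_z f c b x) = f 0 c + b * x"
  unfolding is_ruling_def by blast

lemma ex_ruling:
  assumes "ruled_fun f"
  obtains b where "is_ruling f c b"
proof -
  obtain b where "\<forall>s. f (0 + s) (c - f 0 c * s - b * s\<^sup>2 / 2) = f 0 c + b * s"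
    using assms unfolding ruled_fun_def by blast
  then show thesis
    using that unfolding is_ruling_def ruling_z_def by simp
qed

lemma ruling_slopes_nonempty: "ruled_fun f \<Longrightarrow> ruling_slopes f \<noteq> {}"
  unfolding ruling_slopes_def by (metis empty_Collect_eq ex_ruling)

lemma ex_ruling_through:
  assumes "ruled_fun f"
  obtains c b where "is_ruling f c b" "z = ruling_z f c b x"
proof -
  obtain b where b: "\<And>s. f (x + s) (z - f x z * s - b * s\<^sup>2 / 2) = f x z + b * s"
    using assms unfolding ruled_fun_def by blast
  define c where "c = z + f x z * x - b * x\<^sup>2 / 2"
  have f0c: "f 0 c = f x z - b * x"
    using b[of "- x"] by (simp add: c_def)
  have z_shift: "ruling_z f c b (x + s) = z - f x z * s - b * s\<^sup>2 / 2" for s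
    unfolding ruling_z_def f0c by (simp add: c_def power2_eq_square algebra_simps)
  have "is_ruling f c b"
    unfolding is_ruling_def
  proof
    fix y
    have "f y (ruling_z f c b y) = f (x + (y - x)) (ruling_z f c b (x + (y - x)))"
      by simp
    also have "\<dots> = f 0 c + b * y"
      unfolding z_shift b f0c by (simp add: algebra_simps)
    finally show "f y (ruling_z f c b y) = f 0 c + b * y" .
  qed
  moreover have "z = ruling_z f c b x"
    using z_shift[of 0] by simp
  ultimately show thesis
    using that by blast
qed

lemma rulings_ordered:
  assumes r\<^sub>1: "is_ruling f c\<^sub>1 b\<^sub>1" and r\<^sub>2: "is_ruling f c\<^sub>2 b\<^sub>2" and "c\<^sub>1 < c\<^sub>2"
  shows "ruling_z f c\<^sub>1 b\<^sub>1 x \<le> ruling_z f c\<^sub>2 b\<^sub>2 x"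
proof (rule ccontr)
  define D where "D y = ruling_z f c\<^sub>2 b\<^sub>2 y - ruling_z f c\<^sub>1 b\<^sub>1 y" for y
  assume "\<not> ?thesis"
  then have "D x < 0" "D 0 > 0"
    using \<open>c\<^sub>1 < c\<^sub>2\<close> by (auto simp: D_def ruling_z_def)
  moreover have "isCont D y" for y
    unfolding D_def ruling_z_def by (intro continuous_intros) auto
  ultimately obtain r where "D r = 0"
    using IVT2[of D x 0 0] IVT[of D x 0 0] by (cases "x \<le> 0") auto
  text \<open>Crossing rulings carry the same value of \<open>f\<close> at the crossing point, which forces
    them to be tangent there; but then they do not cross.\<close>
  then have slope: "f 0 c\<^sub>2 - f 0 c\<^sub>1 = (b\<^sub>1 - b\<^sub>2) * r"
    using is_ruling_value[OF r\<^sub>1, of r] is_ruling_value[OF r\<^sub>2, of r]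
      by (simp add: D_def algebra_simps)
  have D_eq: "D y = (c\<^sub>2 - c\<^sub>1) - (f 0 c\<^sub>2 - f 0 c\<^sub>1) * y + (b\<^sub>1 - b\<^sub>2) * y\<^sup>2 / 2" for y
    by (simp add: D_def ruling_z_def field_simps)
  have intercepts: "c\<^sub>2 - c\<^sub>1 = (b\<^sub>1 - b\<^sub>2) * r\<^sup>2 / 2"
    using D_eq[of r] \<open>D r = 0\<close> unfolding slope by (simp add: power2_eq_square)
  have "D y = (b\<^sub>1 - b\<^sub>2) * (y - r)\<^sup>2 / 2" for y
    unfolding D_eq slope intercepts by (simp add: power2_eq_square field_simps)
  with \<open>D 0 > 0\<close> \<open>D x < 0\<close> show False
    by (simp add: zero_less_mult_iff mult_less_0_iff)
qed

lemma rulings_slope_discrim: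
  assumes "is_ruling f c\<^sub>1 b\<^sub>1" "is_ruling f c\<^sub>2 b\<^sub>2" "c\<^sub>1 < c\<^sub>2"
  shows "b\<^sub>2 \<le> b\<^sub>1 \<and> (f 0 c\<^sub>2 - f 0 c\<^sub>1)\<^sup>2 \<le> 2 * (b\<^sub>1 - b\<^sub>2) * (c\<^sub>2 - c\<^sub>1)"
proof -
  have "0 \<le> (b\<^sub>1 - b\<^sub>2) / 2 * x\<^sup>2 + (f 0 c\<^sub>1 - f 0 c\<^sub>2) * x + (c\<^sub>2 - c\<^sub>1)" for x
    using rulings_ordered[OF assms, of x] by (simp add: ruling_z_def field_simps)
  moreover have "discrim ((b\<^sub>1 - b\<^sub>2) / 2) (f 0 c\<^sub>1 - f 0 c\<^sub>2) (c\<^sub>2 - c\<^sub>1)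
      = (f 0 c\<^sub>2 - f 0 c\<^sub>1)\<^sup>2 - 2 * (b\<^sub>1 - b\<^sub>2) * (c\<^sub>2 - c\<^sub>1)"
    by (simp add: discrim_def power2_commute)
  ultimately show ?thesis
    using quadratic_nonneg_discrim[of "(b\<^sub>1 - b\<^sub>2) / 2" "f 0 c\<^sub>1 - f 0 c\<^sub>2" "c\<^sub>2 - c\<^sub>1"] by simp
qed

lemma rulings_slope_antimono:
  "is_ruling f c\<^sub>1 b\<^sub>1 \<Longrightarrow> is_ruling f c\<^sub>2 b\<^sub>2 \<Longrightarrow> c\<^sub>1 < c\<^sub>2 \<Longrightarrow> b\<^sub>2 \<le> b\<^sub>1"
  using rulings_slope_discrim by blast

lemma rulings_discrim:
  assumes "is_ruling f c\<^sub>1 b\<^sub>1" "is_ruling f c\<^sub>2 b\<^sub>2"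
  shows "(f 0 c\<^sub>2 - f 0 c\<^sub>1)\<^sup>2 \<le> 2 * (b\<^sub>1 - b\<^sub>2) * (c\<^sub>2 - c\<^sub>1)"
proof (cases c\<^sub>1 c\<^sub>2 rule: linorder_cases)
  case greater
  then show ?thesis
    using rulings_slope_discrim[OF assms(2,1)] by (simp add: power2_commute algebra_simps)
qed (use rulings_slope_discrim[OF assms] in auto)

lemma graph_Y_eq_plane_if_single_slope:
  assumes ruled: "ruled_fun f" and slopes: "ruling_slopes f = {\<beta>}"
  shows "graph_Y f = {(x, y, w). - \<beta> * x + 1 * y = f 0 0}"
proof -
  define y\<^sub>0 where "y\<^sub>0 = f 0 0"
  obtain b\<^sub>0 where r\<^sub>0: "is_ruling f 0 b\<^sub>0"
    using ex_ruling[OF ruled] .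
  have "f x z = y\<^sub>0 + \<beta> * x" for x z
  proof -
    obtain c b where r: "is_ruling f c b" and z: "z = ruling_z f c b x"
      using ex_ruling_through[OF ruled] .
    have "b = \<beta>" and "b\<^sub>0 = \<beta>"
      using r r\<^sub>0 slopes unfolding ruling_slopes_def by blast+
    then have "f 0 c = f 0 0"
      using rulings_discrim[OF r\<^sub>0 r] by simp
    with \<open>b = \<beta>\<close> show ?thesis
      using is_ruling_value[OF r, of x] z by (simp add: y\<^sub>0_def)
  qed
  then show ?thesis
    by (auto simp: graph_Y_eq y\<^sub>0_def[symmetric])
qed

text \<open>The graph of \<open>reflect_fun f\<close> is the image of the graph of \<open>f\<close> under the
  automorphism \<open>(x, y, z) \<mapsto> (x, -y, -z)\<close> of \<open>\<bbbH>\<close>.\<close>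
definition reflect_fun :: "(real \<Rightarrow> real \<Rightarrow> real) \<Rightarrow> real \<Rightarrow> real \<Rightarrow> real" where
  "reflect_fun f x z = - f x (- z)"

lemma ruling_z_reflect: "ruling_z (reflect_fun f) c b x = - ruling_z f (- c) (- b) x"
  by (simp add: ruling_z_def reflect_fun_def)

lemma is_ruling_reflect: "is_ruling (reflect_fun f) c b \<longleftrightarrow> is_ruling f (- c) (- b)"
proof -
  have "reflect_fun f x (ruling_z (reflect_fun f) c b x) = reflect_fun f 0 c + b * x
      \<longleftrightarrow> f x (ruling_z f (- c) (- b) x) = f 0 (- c) + - b * x" for x
    unfolding ruling_z_reflect reflect_fun_def by auto
  then show ?thesis
    unfolding is_ruling_def by blast
qed

lemma ruled_fun_reflect:
  assumes "ruled_fun f"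
  shows "ruled_fun (reflect_fun f)"
  unfolding ruled_fun_def
proof (intro allI)
  fix x\<^sub>0 z\<^sub>0
  obtain b where
    b: "\<And>s. f (x\<^sub>0 + s) (- z\<^sub>0 - f x\<^sub>0 (- z\<^sub>0) * s - b * s\<^sup>2 / 2) = f x\<^sub>0 (- z\<^sub>0) + b * s"
    using assms unfolding ruled_fun_def by blast
  show "\<exists>b. \<forall>s. reflect_fun f (x\<^sub>0 + s) (z\<^sub>0 - reflect_fun f x\<^sub>0 z\<^sub>0 * s - b * s\<^sup>2 / 2)
      = reflect_fun f x\<^sub>0 z\<^sub>0 + b * s"
    by (rule exI[of _ "- b"]) (use b in \<open>simp add: reflect_fun_def algebra_simps\<close>)
qed

lemma ruling_slopes_reflect: "ruling_slopes (reflect_fun f) = uminus ` ruling_slopes f"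
proof (intro set_eqI iffI)
  fix b
  assume "b \<in> ruling_slopes (reflect_fun f)"
  then show "b \<in> uminus ` ruling_slopes f"
    unfolding ruling_slopes_def is_ruling_reflect by (auto intro: image_eqI[of _ _ "- b"])
next
  fix b
  assume "b \<in> uminus ` ruling_slopes f"
  then obtain c where "is_ruling f c (- b)"
    unfolding ruling_slopes_def by auto
  then have "is_ruling (reflect_fun f) (- c) b"
    by (simp add: is_ruling_reflect)
  then show "b \<in> ruling_slopes (reflect_fun f)"
    unfolding ruling_slopes_def by blast
qed

section \<open>Blow-up limits\<close>

definition dilation_rulings ::
    "(real \<Rightarrow> real \<Rightarrow> real) \<Rightarrow> real \<Rightarrow> real \<Rightarrow> (real \<Rightarrow> real) \<Rightarrow> (real \<Rightarrow> real) \<Rightarrow> bool" where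
  "dilation_rulings f x z c b \<longleftrightarrow>
     (\<forall>t. is_ruling f (c t) (b t) \<and> t\<^sup>2 * z = ruling_z f (c t) (b t) (t * x))"

lemma ex_dilation_rulings:
  assumes "ruled_fun f"
  obtains c b where "dilation_rulings f x z c b"
proof -
  have "\<forall>t. \<exists>c b. is_ruling f c b \<and> t\<^sup>2 * z = ruling_z f c b (t * x)"
    using ex_ruling_through[OF assms] by metis
  then show thesis
    using that unfolding dilation_rulings_def by metis
qed

lemma dilation_rulings_quotient:
  assumes "dilation_rulings f x z c b" and "t \<noteq> 0"
  shows "f (t * x) (t\<^sup>2 * z) / t = f 0 (c t) / t + b t * x"
  using assms is_ruling_value[of f "c t" "b t" "t * x"]
  by (simp add: dilation_rulings_def field_simps)

lemma dilation_rulings_intercept: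
  assumes "dilation_rulings f x z c b" and "t \<noteq> 0"
  shows "c t / t\<^sup>2 = z + f 0 (c t) / t * x + b t * x\<^sup>2 / 2"
proof -
  have "t\<^sup>2 * z = c t - f 0 (c t) * (t * x) - b t * (t * x)\<^sup>2 / 2"
    using assms(1) by (simp add: dilation_rulings_def ruling_z_def)
  with assms(2) show ?thesis
    by (simp add: field_simps power2_eq_square)
qed

lemma dilation_rulings_reflect:
  "dilation_rulings f x z c b \<Longrightarrow> dilation_rulings (reflect_fun f) x (- z) (\<lambda>t. - c t) (\<lambda>t. - b t)"
  unfolding dilation_rulings_def by (simp add: is_ruling_reflect ruling_z_reflect)

text \<open>The height of the ruling \<open>(c\<^sub>1, b\<^sub>1)\<close> above \<open>(t x, t\<^sup>2 z)\<close> grows quadratically in \<open>t\<close>;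
  since rulings do not cross, the ruling through that point eventually starts below \<open>c\<^sub>1\<close>.\<close>
lemma eventually_intercept_le:
  assumes rulings: "dilation_rulings f x z c b" and r\<^sub>1: "is_ruling f c\<^sub>1 b\<^sub>1"
    and below: "z + b\<^sub>1 * x\<^sup>2 / 2 < 0"
  shows "eventually (\<lambda>t. c t \<le> c\<^sub>1) at_top"
proof -
  have "eventually (\<lambda>t. f 0 c\<^sub>1 * x * t - c\<^sub>1 < - (z + b\<^sub>1 * x\<^sup>2 / 2) * t\<^sup>2) at_top"
    using eventually_quadratic_dominates[of _ "f 0 c\<^sub>1 * x" "- c\<^sub>1"] below by simp
  then show ?thesis
  proof eventually_elim
    case (elim t)
    show "c t \<le> c\<^sub>1"
    proof (rule ccontr)
      assume "\<not> c t \<le> c\<^sub>1"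
      then have "ruling_z f c\<^sub>1 b\<^sub>1 (t * x) \<le> ruling_z f (c t) (b t) (t * x)"
        using rulings r\<^sub>1 by (intro rulings_ordered) (auto simp: dilation_rulings_def)
      also have "\<dots> = t\<^sup>2 * z"
        using rulings by (simp add: dilation_rulings_def)
      finally show False
        using elim by (simp add: ruling_z_def power_mult_distrib algebra_simps)
    qed
  qed
qed

lemma eventually_intercept_ge:
  assumes rulings: "dilation_rulings f x z c b" and r\<^sub>2: "is_ruling f c\<^sub>2 b\<^sub>2"
    and above: "z + b\<^sub>2 * x\<^sup>2 / 2 > 0"
  shows "eventually (\<lambda>t. c\<^sub>2 \<le> c t) at_top"
proof -
  have "is_ruling (reflect_fun f) (- c\<^sub>2) (- b\<^sub>2)"
    using r\<^sub>2 by (simp add: is_ruling_reflect)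
  from eventually_intercept_le[OF dilation_rulings_reflect[OF rulings] this] above
  show ?thesis
    by simp
qed

lemma tendsto_blowup_middle:
  assumes cont: "continuous_on UNIV (f 0)" and rulings: "dilation_rulings f x z c b"
    and "x \<noteq> 0"
    and r\<^sub>1: "is_ruling f c\<^sub>1 b\<^sub>1" and below: "z + b\<^sub>1 * x\<^sup>2 / 2 < 0"
    and r\<^sub>2: "is_ruling f c\<^sub>2 b\<^sub>2" and above: "z + b\<^sub>2 * x\<^sup>2 / 2 > 0"
  shows "((\<lambda>t. f (t * x) (t\<^sup>2 * z) / t) \<longlongrightarrow> - 2 * z / x) at_top"
proof -
  text \<open>The intercepts stay in \<open>[c\<^sub>2, c\<^sub>1]\<close>, where \<open>f 0\<close> is bounded.\<close>
  have between: "eventually (\<lambda>t. c t \<in> {c\<^sub>2..c\<^sub>1}) at_top"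
    using eventually_intercept_le[OF rulings r\<^sub>1 below]
      eventually_intercept_ge[OF rulings r\<^sub>2 above]
    by eventually_elim simp
  have "bounded (f 0 ` {c\<^sub>2..c\<^sub>1})"
    by (intro compact_imp_bounded compact_continuous_image continuous_on_subset[OF cont]) auto
  then obtain M where M: "\<forall>c\<in>{c\<^sub>2..c\<^sub>1}. \<bar>f 0 c\<bar> \<le> M"
    unfolding bounded_iff by auto
  have value_lim: "((\<lambda>t. f 0 (c t) / t) \<longlongrightarrow> 0) at_top"
    using between M by (intro tendsto_div_at_top_if_bounded[of _ M]) (auto elim: eventually_mono)
  have "((\<lambda>t. c t / t) \<longlongrightarrow> 0) at_top"
    using between by (intro tendsto_div_at_top_if_bounded[of _ "\<bar>c\<^sub>1\<bar> + \<bar>c\<^sub>2\<bar>"])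
      (auto elim: eventually_mono)
  moreover have "((\<lambda>t::real. 1 / t) \<longlongrightarrow> 0) at_top"
    using tendsto_div_at_top_if_bounded[of "\<lambda>_. 1" 1] by simp
  ultimately have "((\<lambda>t. c t / t * (1 / t)) \<longlongrightarrow> 0 * 0) at_top"
    by (rule tendsto_mult)
  then have intercept_lim: "((\<lambda>t. c t / t\<^sup>2) \<longlongrightarrow> 0) at_top"
    by (simp add: power2_eq_square)
  have "((\<lambda>t. 2 / x * (c t / t\<^sup>2) - f 0 (c t) / t - 2 * z / x) \<longlongrightarrow> 2 / x * 0 - 0 - 2 * z / x) at_top"
    by (intro tendsto_diff tendsto_mult tendsto_const intercept_lim value_lim)
  moreover have "eventually (\<lambda>t. 2 / x * (c t / t\<^sup>2) - f 0 (c t) / t - 2 * z / x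
      = f (t * x) (t\<^sup>2 * z) / t) at_top"
    using eventually_gt_at_top[of 0]
  proof eventually_elim
    case (elim t)
    define \<gamma> \<phi> where "\<gamma> = c t / t\<^sup>2" and "\<phi> = f 0 (c t) / t"
    have "\<gamma> = z + \<phi> * x + b t * x\<^sup>2 / 2" and "f (t * x) (t\<^sup>2 * z) / t = \<phi> + b t * x"
      using dilation_rulings_intercept[OF rulings] dilation_rulings_quotient[OF rulings] elim
      by (simp_all add: \<gamma>_def \<phi>_def)
    with \<open>x \<noteq> 0\<close> show ?case
      unfolding \<gamma>_def[symmetric] \<phi>_def[symmetric] by (simp add: field_simps power2_eq_square)
  qed
  ultimately show ?thesis
    by (simp add: tendsto_cong)
qed

text \<open>Below a ruling of almost maximal slope, the discriminant inequality leaves \<open>f 0\<close> little room.\<close>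
lemma intercept_value_sublinear:
  assumes ruled: "ruled_fun f" and bdd: "bdd_above (ruling_slopes f)" and "e > 0"
  shows "eventually (\<lambda>c. (f 0 c)\<^sup>2 \<le> e * - c) at_bot"
proof -
  let ?S = "ruling_slopes f"
  obtain b' where "b' \<in> ?S" "Sup ?S - e / 8 < b'"
    using less_cSup_iff[OF ruling_slopes_nonempty[OF ruled] bdd, of "Sup ?S - e / 8"] \<open>e > 0\<close>
    by auto
  then obtain c' where r': "is_ruling f c' b'" and "Sup ?S - b' < e / 8"
    unfolding ruling_slopes_def by auto
  have "eventually (\<lambda>c. c < c' \<and> c \<le> - c' - 4 * (f 0 c')\<^sup>2 / e) at_bot"
    by (intro eventually_conj eventually_le_at_bot eventually_gt_at_bot)
  then show ?thesis
  proof (elim eventually_mono conjE)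
    fix c
    assume "c < c'" and far: "c \<le> - c' - 4 * (f 0 c')\<^sup>2 / e"
    obtain b where r: "is_ruling f c b"
      using ex_ruling[OF ruled] .
    have "b \<le> Sup ?S"
      using r bdd by (auto simp: ruling_slopes_def intro: cSup_upper)
    have "(f 0 c' - f 0 c)\<^sup>2 \<le> 2 * (b - b') * (c' - c)"
      using rulings_slope_discrim[OF r r' \<open>c < c'\<close>] by simp
    also have "\<dots> \<le> e / 4 * (c' - c)"
      using \<open>b \<le> Sup ?S\<close> \<open>Sup ?S - b' < e / 8\<close> \<open>c < c'\<close> by (intro mult_right_mono) auto
    moreover have "(f 0 c)\<^sup>2 \<le> 2 * (f 0 c' - f 0 c)\<^sup>2 + 2 * (f 0 c')\<^sup>2"
      using zero_le_power2[of "2 * f 0 c' - f 0 c"] by (simp add: power2_eq_square algebra_simps)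
    moreover have "e / 2 * (c' - c) + 2 * (f 0 c')\<^sup>2 \<le> e * - c"
      using far \<open>e > 0\<close> by (simp add: field_simps)
    ultimately show "(f 0 c)\<^sup>2 \<le> e * - c"
      by linarith
  qed
qed

lemma filterlim_intercept_at_bot:
  assumes ruled: "ruled_fun f" and rulings: "dilation_rulings f x z c b"
    and bdd: "bdd_above (ruling_slopes f)" and below: "z + Sup (ruling_slopes f) * x\<^sup>2 / 2 < 0"
  shows "filterlim c at_bot at_top"
  unfolding filterlim_at_bot
proof
  fix C
  obtain b\<^sub>C where r\<^sub>C: "is_ruling f C b\<^sub>C"
    using ex_ruling[OF ruled] .
  then have "b\<^sub>C \<le> Sup (ruling_slopes f)"
    using bdd by (auto simp: ruling_slopes_def intro: cSup_upper)
  then have "b\<^sub>C * x\<^sup>2 \<le> Sup (ruling_slopes f) * x\<^sup>2"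
    by (rule mult_right_mono) simp
  with below have "z + b\<^sub>C * x\<^sup>2 / 2 < 0"
    by simp
  then show "eventually (\<lambda>t. c t \<le> C) at_top"
    by (rule eventually_intercept_le[OF rulings r\<^sub>C])
qed

lemma tendsto_slope_Sup:
  assumes ruled: "ruled_fun f" and rulings: "dilation_rulings f x z c b"
    and bdd: "bdd_above (ruling_slopes f)" and c_bot: "filterlim c at_bot at_top"
  shows "(b \<longlongrightarrow> Sup (ruling_slopes f)) at_top"
proof (rule order_tendstoI)
  have r: "is_ruling f (c t) (b t)" for t
    using rulings by (simp add: dilation_rulings_def)
  fix a
  show "eventually (\<lambda>t. a < b t) at_top" if "a < Sup (ruling_slopes f)"
  proof -
    obtain c' b' where r': "is_ruling f c' b'" and "a < b'"
      using less_cSup_iff[OF ruling_slopes_nonempty[OF ruled] bdd] \<open>a < _\<close>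
      by (auto simp: ruling_slopes_def)
    have "eventually (\<lambda>t. c t < c') at_top"
      using c_bot by (simp add: filterlim_at_bot_dense)
    then show ?thesis
      by eventually_elim (use rulings_slope_antimono[OF r r'] \<open>a < b'\<close> in force)
  qed
  show "eventually (\<lambda>t. b t < a) at_top" if "Sup (ruling_slopes f) < a"
    using r bdd that
      by (intro always_eventually allI) (metis cSup_upper le_less_trans ruling_slopes_def
        mem_Collect_eq)
qed

lemma tendsto_intercept_value_div_zero:
  assumes ruled: "ruled_fun f" and rulings: "dilation_rulings f x z c b"
    and bdd: "bdd_above (ruling_slopes f)" and c_bot: "filterlim c at_bot at_top"
    and b_lower: "eventually (\<lambda>t. \<beta> < b t) at_top"
  shows "((\<lambda>t. f 0 (c t) / t) \<longlongrightarrow> 0) at_top"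
proof (rule tendsto_zero_if_sq_bound)
  fix e :: real
  assume "e > 0"
  have "eventually (\<lambda>t. (f 0 (c t))\<^sup>2 \<le> e * - c t) at_top"
    using c_bot intercept_value_sublinear[OF ruled bdd \<open>e > 0\<close>]
    by (rule filterlim_iff[THEN iffD1, rule_format])
  then show "eventually (\<lambda>t. (f 0 (c t) / t)\<^sup>2
      \<le> e * (\<bar>z\<bar> + \<bar>\<beta>\<bar> * x\<^sup>2 / 2 + \<bar>x\<bar> * \<bar>f 0 (c t) / t\<bar>)) at_top"
    using b_lower eventually_gt_at_top[of 0]
  proof eventually_elim
    case (elim t)
    define \<phi> where "\<phi> = f 0 (c t) / t"
    have "- c t = t\<^sup>2 * (- z - \<phi> * x - b t * x\<^sup>2 / 2)"
      using dilation_rulings_intercept[OF rulings, of t] elim by (simp add: \<phi>_def field_simps)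
    also have "\<dots> \<le> t\<^sup>2 * (\<bar>z\<bar> + \<bar>\<beta>\<bar> * x\<^sup>2 / 2 + \<bar>x\<bar> * \<bar>\<phi>\<bar>)"
    proof (rule mult_left_mono)
      have "- (\<phi> * x) \<le> \<bar>x\<bar> * \<bar>\<phi>\<bar>"
        using abs_ge_minus_self[of "\<phi> * x"] by (simp only: abs_mult mult.commute)
      moreover have "- b t * x\<^sup>2 \<le> \<bar>\<beta>\<bar> * x\<^sup>2"
        using elim by (intro mult_right_mono) auto
      ultimately show "- z - \<phi> * x - b t * x\<^sup>2 / 2 \<le> \<bar>z\<bar> + \<bar>\<beta>\<bar> * x\<^sup>2 / 2 + \<bar>x\<bar> * \<bar>\<phi>\<bar>"
        by simp
    qed simp
    finally have "- c t \<le> t\<^sup>2 * (\<bar>z\<bar> + \<bar>\<beta>\<bar> * x\<^sup>2 / 2 + \<bar>x\<bar> * \<bar>\<phi>\<bar>)" .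
    then have "e * - c t \<le> e * (t\<^sup>2 * (\<bar>z\<bar> + \<bar>\<beta>\<bar> * x\<^sup>2 / 2 + \<bar>x\<bar> * \<bar>\<phi>\<bar>))"
      using \<open>e > 0\<close> by (rule mult_left_mono[OF _ less_imp_le])
    with elim(1) have "t\<^sup>2 * \<phi>\<^sup>2 \<le> t\<^sup>2 * (e * (\<bar>z\<bar> + \<bar>\<beta>\<bar> * x\<^sup>2 / 2 + \<bar>x\<bar> * \<bar>\<phi>\<bar>))"
      using \<open>0 < t\<close> by (simp add: \<phi>_def power_divide mult_ac)
    then show ?case
      using \<open>0 < t\<close> by (simp add: \<phi>_def)
  qed
qed simp_all

lemma tendsto_blowup_lower:
  assumes ruled: "ruled_fun f" and bdd: "bdd_above (ruling_slopes f)"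
    and below: "z + Sup (ruling_slopes f) * x\<^sup>2 / 2 < 0"
  shows "((\<lambda>t. f (t * x) (t\<^sup>2 * z) / t) \<longlongrightarrow> Sup (ruling_slopes f) * x) at_top"
proof -
  obtain c b where rulings: "dilation_rulings f x z c b"
    using ex_dilation_rulings[OF ruled] .
  have c_bot: "filterlim c at_bot at_top"
    by (rule filterlim_intercept_at_bot[OF ruled rulings bdd below])
  have b_lim: "(b \<longlongrightarrow> Sup (ruling_slopes f)) at_top"
    by (rule tendsto_slope_Sup[OF ruled rulings bdd c_bot])
  have "eventually (\<lambda>t. Sup (ruling_slopes f) - 1 < b t) at_top"
    using b_lim by (rule order_tendstoD) simp
  then have "((\<lambda>t. f 0 (c t) / t + b t * x) \<longlongrightarrow> 0 + Sup (ruling_slopes f) * x) at_top"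
    by (intro tendsto_add tendsto_mult_right b_lim
        tendsto_intercept_value_div_zero[OF ruled rulings bdd c_bot])
  moreover have "eventually (\<lambda>t. f 0 (c t) / t + b t * x = f (t * x) (t\<^sup>2 * z) / t) at_top"
    using eventually_gt_at_top[of 0]
    by eventually_elim (simp add: dilation_rulings_quotient[OF rulings])
  ultimately show ?thesis
    by (simp add: tendsto_cong)
qed

lemma tendsto_blowup_upper:
  assumes ruled: "ruled_fun f" and bdd: "bdd_below (ruling_slopes f)"
    and above: "z + Inf (ruling_slopes f) * x\<^sup>2 / 2 > 0"
  shows "((\<lambda>t. f (t * x) (t\<^sup>2 * z) / t) \<longlongrightarrow> Inf (ruling_slopes f) * x) at_top"
proof -
  have Sup_reflect: "Sup (ruling_slopes (reflect_fun f)) = - Inf (ruling_slopes f)"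
    using uminus_cINF[of id, OF _ ruling_slopes_nonempty[OF ruled]] bdd
    by (simp add: ruling_slopes_reflect)
  have "((\<lambda>t. reflect_fun f (t * x) (t\<^sup>2 * - z) / t)
      \<longlongrightarrow> Sup (ruling_slopes (reflect_fun f)) * x) at_top"
  proof (rule tendsto_blowup_lower[OF ruled_fun_reflect[OF ruled]])
    show "bdd_above (ruling_slopes (reflect_fun f))"
      using bdd by (simp add: ruling_slopes_reflect)
    show "- z + Sup (ruling_slopes (reflect_fun f)) * x\<^sup>2 / 2 < 0"
      using above unfolding Sup_reflect by simp
  qed
  then have "((\<lambda>t. - (f (t * x) (t\<^sup>2 * z) / t)) \<longlongrightarrow> - (Inf (ruling_slopes f) * x)) at_top"
    by (simp add: reflect_fun_def Sup_reflect)
  then show ?thesis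
    by (rule tendsto_minus_cancel)
qed

text \<open>For \<open>x \<noteq> 0\<close> this is \<open>x\<close> times \<open>- 2 * z / x\<^sup>2\<close> clamped to \<open>[Inf S, Sup S]\<close>.\<close>
definition blowup_fun :: "real set \<Rightarrow> real \<Rightarrow> real \<Rightarrow> real" where
  "blowup_fun S x z =
     (if bdd_above S \<and> z + Sup S * x\<^sup>2 / 2 < 0 then Sup S * x
      else if bdd_below S \<and> z + Inf S * x\<^sup>2 / 2 > 0 then Inf S * x
      else - 2 * z / x)"

lemma tendsto_blowup_fun:
  assumes ruled: "ruled_fun f" and cont: "continuous_on UNIV (f 0)" and "x \<noteq> 0"
    and sup: "bdd_above (ruling_slopes f) \<Longrightarrow> z + Sup (ruling_slopes f) * x\<^sup>2 / 2 \<noteq> 0"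
    and inf: "bdd_below (ruling_slopes f) \<Longrightarrow> z + Inf (ruling_slopes f) * x\<^sup>2 / 2 \<noteq> 0"
  shows "((\<lambda>t. f (t * x) (t\<^sup>2 * z) / t) \<longlongrightarrow> blowup_fun (ruling_slopes f) x z) at_top"
proof -
  let ?S = "ruling_slopes f"
  consider (lower) "bdd_above ?S" "z + Sup ?S * x\<^sup>2 / 2 < 0"
    | (upper) "\<not> (bdd_above ?S \<and> z + Sup ?S * x\<^sup>2 / 2 < 0)"
        "bdd_below ?S" "z + Inf ?S * x\<^sup>2 / 2 > 0"
    | (middle) "\<not> (bdd_above ?S \<and> z + Sup ?S * x\<^sup>2 / 2 < 0)"
        "\<not> (bdd_below ?S \<and> z + Inf ?S * x\<^sup>2 / 2 > 0)"
    by argo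
  then show ?thesis
  proof cases
    case lower
    then show ?thesis
      using tendsto_blowup_lower[OF ruled] by (simp add: blowup_fun_def)
  next
    case upper
    then show ?thesis
      using tendsto_blowup_upper[OF ruled] by (auto simp: blowup_fun_def)
  next
    case middle
    have "x\<^sup>2 > 0"
      using \<open>x \<noteq> 0\<close> by simp
    have "\<exists>b\<in>?S. - 2 * z / x\<^sup>2 < b"
      using middle(1) sup \<open>x\<^sup>2 > 0\<close>
      by (intro ex_greater_if_less_Sup ruling_slopes_nonempty ruled) (auto simp: field_simps)
    then obtain c\<^sub>2 b\<^sub>2 where r\<^sub>2: "is_ruling f c\<^sub>2 b\<^sub>2" and above: "z + b\<^sub>2 * x\<^sup>2 / 2 > 0"
      using \<open>x\<^sup>2 > 0\<close> by (auto simp: ruling_slopes_def field_simps)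
    have "\<exists>b\<in>?S. b < - 2 * z / x\<^sup>2"
      using middle(2) inf \<open>x\<^sup>2 > 0\<close>
      by (intro ex_less_if_Inf_less ruling_slopes_nonempty ruled) (auto simp: field_simps)
    then obtain c\<^sub>1 b\<^sub>1 where r\<^sub>1: "is_ruling f c\<^sub>1 b\<^sub>1" and below: "z + b\<^sub>1 * x\<^sup>2 / 2 < 0"
      using \<open>x\<^sup>2 > 0\<close> by (auto simp: ruling_slopes_def field_simps)
    obtain c b where "dilation_rulings f x z c b"
      using ex_dilation_rulings[OF ruled] .
    from tendsto_blowup_middle[OF cont this \<open>x \<noteq> 0\<close> r\<^sub>1 below r\<^sub>2 above] middle
    show ?thesis
      by (auto simp: blowup_fun_def)
  qed
qed

section \<open>Pairs of half-spaces\<close>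

definition left_of :: "real \<Rightarrow> real \<Rightarrow> real \<Rightarrow> bool" where
  "left_of \<phi> x y \<longleftrightarrow> 0 < y * cos \<phi> - x * sin \<phi>"

text \<open>Up to null sets, both the rotated sets \<open>BP u\<close> and the blow-up limits of the
  epigraphs have this form.\<close>
definition halfspace_pair :: "real \<Rightarrow> real \<Rightarrow> heis set" where
  "halfspace_pair \<phi> \<psi> = {(x, y, w). (w < 0 \<and> left_of \<phi> x y) \<or> (0 < w \<and> left_of \<psi> x y)}"

definition angle_sup :: "real set \<Rightarrow> real" where
  "angle_sup S = (if bdd_above S then arctan (Sup S) else pi / 2)"

definition angle_inf :: "real set \<Rightarrow> real" where
  "angle_inf S = (if bdd_below S then arctan (Inf S) else - (pi / 2))"

lemma left_of_arctan: "left_of (arctan \<beta>) x y \<longleftrightarrow> \<beta> * x < y"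
proof -
  have "y * cos (arctan \<beta>) - x * sin (arctan \<beta>) = (y - \<beta> * x) / sqrt (1 + \<beta>\<^sup>2)"
    by (simp add: cos_arctan sin_arctan diff_divide_distrib)
  moreover have "sqrt (1 + \<beta>\<^sup>2) > 0"
    by (simp add: add_pos_nonneg)
  ultimately show ?thesis
    unfolding left_of_def by (simp add: zero_less_divide_iff)
qed

lemma left_of_angle_sup:
  "left_of (angle_sup S) x y \<longleftrightarrow> (if bdd_above S then Sup S * x < y else x < 0)"
proof (cases "bdd_above S")
  case False
  then show ?thesis
    by (simp add: angle_sup_def left_of_def)
qed (simp add: angle_sup_def left_of_arctan)

lemma left_of_angle_inf:
  "left_of (angle_inf S) x y \<longleftrightarrow> (if bdd_below S then Inf S * x < y else 0 < x)"
proof (cases "bdd_below S")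
  case False
  then show ?thesis
    by (simp add: angle_inf_def left_of_def)
qed (simp add: angle_inf_def left_of_arctan)

lemma angle_inf_le_angle_sup:
  fixes S :: "real set"
  assumes "S \<noteq> {}"
  shows "angle_inf S \<le> angle_sup S"
  using arctan_lbound arctan_ubound cInf_le_cSup[OF assms]
  by (auto simp: angle_sup_def angle_inf_def arctan_le_iff less_imp_le)

lemma angle_sup_eq_angle_inf_imp_singleton:
  fixes S :: "real set"
  assumes "S \<noteq> {}" and "angle_sup S = angle_inf S"
  shows "\<exists>\<beta>. S = {\<beta>}"
proof -
  have "angle_inf S < pi / 2" and "- (pi / 2) < angle_sup S"
    using arctan_ubound arctan_lbound by (auto simp: angle_inf_def angle_sup_def)
  with assms(2) have "bdd_above S" and "bdd_below S"
    by (auto simp: angle_sup_def angle_inf_def split: if_splits)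
  with assms(2) have "Sup S = Inf S"
    by (simp add: angle_sup_def angle_inf_def arctan_eq_iff)
  then have "b = Sup S" if "b \<in> S" for b
    using that \<open>bdd_above S\<close> \<open>bdd_below S\<close> cSup_upper cInf_lower by (metis antisym)
  then have "S = {Sup S}"
    using assms(1) by blast
  then show ?thesis ..
qed

lemma left_of_angle_sup_if_below:
  assumes "bdd_above S \<Longrightarrow> x * (y - \<beta> * x) < 0 \<and> \<beta> \<le> Sup S"
  shows "left_of (angle_sup S) x y \<longleftrightarrow> x < 0"
proof (cases "bdd_above S")
  case True
  with assms have below: "x * (y - \<beta> * x) < 0" and "\<beta> \<le> Sup S"
    by auto
  have "Sup S * x < y \<longleftrightarrow> x < 0"
  proof (cases "0 < x")
    case True
    then have "y < \<beta> * x" and "\<beta> * x \<le> Sup S * x"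
      using below \<open>\<beta> \<le> Sup S\<close> by (auto simp: mult_less_0_iff intro: mult_right_mono)
    then have "\<not> Sup S * x < y"
      by linarith
    with True show ?thesis
      by simp
  next
    case False
    then have "x < 0" and "\<beta> * x < y" and "Sup S * x \<le> \<beta> * x"
      using below \<open>\<beta> \<le> Sup S\<close> by (auto simp: mult_less_0_iff intro: mult_right_mono_neg)
    then show ?thesis
      by linarith
  qed
  with True show ?thesis
    by (simp add: left_of_angle_sup)
qed (simp add: left_of_angle_sup)

lemma left_of_angle_inf_if_above:
  assumes "bdd_below S \<Longrightarrow> 0 < x * (y - \<beta> * x) \<and> Inf S \<le> \<beta>"
  shows "left_of (angle_inf S) x y \<longleftrightarrow> 0 < x"
proof (cases "bdd_below S")
  case True
  with assms have above: "0 < x * (y - \<beta> * x)" and "Inf S \<le> \<beta>"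
    by auto
  have "Inf S * x < y \<longleftrightarrow> 0 < x"
  proof (cases "0 < x")
    case True
    then have "\<beta> * x < y" and "Inf S * x \<le> \<beta> * x"
      using above \<open>Inf S \<le> \<beta>\<close> by (auto simp: zero_less_mult_iff intro: mult_right_mono)
    with True show ?thesis
      by linarith
  next
    case False
    then have "x < 0" and "y < \<beta> * x" and "\<beta> * x \<le> Inf S * x"
      using above \<open>Inf S \<le> \<beta>\<close> by (auto simp: zero_less_mult_iff intro: mult_right_mono_neg)
    then have "\<not> Inf S * x < y"
      by linarith
    with \<open>x < 0\<close> show ?thesis
      by simp
  qed
  with True show ?thesis
    by (simp add: left_of_angle_inf)
qed (simp add: left_of_angle_inf)

lemma less_blowup_fun_iff:
  fixes S :: "real set"
  assumes "S \<noteq> {}" and "x \<noteq> 0" and "w \<noteq> 0"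
  shows "blowup_fun S x (w - x * y / 2) < y
    \<longleftrightarrow> (x, y, w) \<in> halfspace_pair (angle_sup S) (angle_inf S)"
proof -
  define z where "z = w - x * y / 2"
  have shift: "z + \<beta> * x\<^sup>2 / 2 = w - x * (y - \<beta> * x) / 2" for \<beta>
    by (simp add: z_def power2_eq_square field_simps)
  have Inf_le_Sup: "bdd_above S \<Longrightarrow> bdd_below S \<Longrightarrow> Inf S \<le> Sup S"
    using cInf_le_cSup[OF assms(1)] .
  consider (lower) "bdd_above S" "z + Sup S * x\<^sup>2 / 2 < 0"
    | (upper) "\<not> (bdd_above S \<and> z + Sup S * x\<^sup>2 / 2 < 0)" "bdd_below S" "z + Inf S * x\<^sup>2 / 2 > 0"
    | (middle) "\<not> (bdd_above S \<and> z + Sup S * x\<^sup>2 / 2 < 0)"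
        "\<not> (bdd_below S \<and> z + Inf S * x\<^sup>2 / 2 > 0)"
    by argo
  then show ?thesis
  proof cases
    case lower
    then have "0 < w \<Longrightarrow> left_of (angle_inf S) x y \<longleftrightarrow> 0 < x"
      using Inf_le_Sup unfolding shift by (intro left_of_angle_inf_if_above[of _ _ _ "Sup S"]) auto
    moreover have "Sup S * x < y \<longleftrightarrow> 0 < x" if "0 < w"
    proof -
      have "0 < x * (y - Sup S * x)"
        using lower(2) that unfolding shift by linarith
      then show ?thesis
        by (auto simp: zero_less_mult_iff)
    qed
    ultimately show ?thesis
      using lower \<open>w \<noteq> 0\<close>
      by (cases "w < 0")
        (auto simp: halfspace_pair_def blowup_fun_def left_of_angle_sup simp flip: z_def)
  next
    case upper
    then have "w < 0 \<Longrightarrow> left_of (angle_sup S) x y \<longleftrightarrow> x < 0"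
      using Inf_le_Sup unfolding shift by (intro left_of_angle_sup_if_below[of _ _ _ "Inf S"]) auto
    moreover have "Inf S * x < y \<longleftrightarrow> x < 0" if "w < 0"
    proof -
      have "x * (y - Inf S * x) < 0"
        using upper(3) that unfolding shift by linarith
      then show ?thesis
        by (auto simp: mult_less_0_iff)
    qed
    ultimately show ?thesis
      using upper \<open>w \<noteq> 0\<close>
      by (cases "w < 0")
        (auto simp: halfspace_pair_def blowup_fun_def left_of_angle_inf simp flip: z_def)
  next
    case middle
    then have "w < 0 \<Longrightarrow> left_of (angle_sup S) x y \<longleftrightarrow> x < 0"
      unfolding shift by (intro left_of_angle_sup_if_below[of _ _ _ "Sup S"]) auto
    moreover have "0 < w \<Longrightarrow> left_of (angle_inf S) x y \<longleftrightarrow> 0 < x"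
      using middle unfolding shift by (intro left_of_angle_inf_if_above[of _ _ _ "Inf S"]) auto
    moreover have "blowup_fun S x z = y - 2 * w / x"
      using middle \<open>x \<noteq> 0\<close> by (auto simp: blowup_fun_def z_def field_simps)
    ultimately show ?thesis
      using \<open>w \<noteq> 0\<close>
      by (cases "w < 0") (auto simp: halfspace_pair_def zero_less_divide_iff simp flip: z_def)
  qed
qed

lemma bfun_eq_blowup_fun: "0 \<le> u \<Longrightarrow> bfun u = blowup_fun {- u..u}"
  by (auto simp: fun_eq_iff bfun_def blowup_fun_def abs_le_iff)

lemma mem_BP_ereal_iff:
  assumes "0 \<le> u" and "x \<noteq> 0" and "w \<noteq> 0"
  shows "(x, y, w) \<in> BP (ereal u) \<longleftrightarrow> (x, y, w) \<in> halfspace_pair (arctan u) (- arctan u)"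
proof -
  have "angle_sup {- u..u} = arctan u" and "angle_inf {- u..u} = - arctan u"
    using \<open>0 \<le> u\<close> by (simp_all add: angle_sup_def angle_inf_def arctan_minus)
  with less_blowup_fun_iff[of "{- u..u}" x w y] assms show ?thesis
    by (simp add: BP_def epi_Y_eq bfun_eq_blowup_fun)
qed

lemma BP_infinity: "BP \<infinity> = halfspace_pair (pi / 2) (- (pi / 2))"
  by (auto simp: BP_def halfspace_pair_def left_of_def zero_less_mult_iff)

lemma rot_rot: "rot \<alpha> (rot \<beta> p) = rot (\<alpha> + \<beta>) p"
  by (cases p) (simp add: rot_def sin_add cos_add algebra_simps)

lemma mem_rot_image_iff: "p \<in> rot \<theta> ` A \<longleftrightarrow> rot (- \<theta>) p \<in> A"
proof -
  have rot_zero: "rot 0 q = q" for q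
    by (cases q) (simp add: rot_def)
  show ?thesis
    by (metis (no_types, opaque_lifting) add.right_inverse add.left_inverse image_iff
            rot_rot rot_zero)
qed

lemma rot_image_halfspace_pair: "rot \<theta> ` halfspace_pair \<phi> \<psi> = halfspace_pair (\<phi> + \<theta>) (\<psi> + \<theta>)"
proof -
  have left_of_rot: "left_of \<phi> (x * cos \<theta> + y * sin \<theta>) (y * cos \<theta> - x * sin \<theta>)
      \<longleftrightarrow> left_of (\<phi> + \<theta>) x y" for \<phi> x y
    by (simp add: left_of_def sin_add cos_add algebra_simps)
  show ?thesis
  proof (intro set_eqI)
    fix p :: heis
    obtain x y w where p: "p = (x, y, w)"
      by (cases p)
    have "rot (- \<theta>) p = (x * cos \<theta> + y * sin \<theta>, y * cos \<theta> - x * sin \<theta>, w)"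
      by (simp add: rot_def p algebra_simps)
    then show "p \<in> rot \<theta> ` halfspace_pair \<phi> \<psi> \<longleftrightarrow> p \<in> halfspace_pair (\<phi> + \<theta>) (\<psi> + \<theta>)"
      unfolding mem_rot_image_iff by (simp add: halfspace_pair_def left_of_rot p)
  qed
qed

lemma open_halfspace_pair: "open (halfspace_pair \<phi> \<psi>)"
proof -
  have "halfspace_pair \<phi> \<psi> =
      {p. snd (snd p) < 0 \<and> 0 < fst (snd p) * cos \<phi> - fst p * sin \<phi>}
      \<union> {p. 0 < snd (snd p) \<and> 0 < fst (snd p) * cos \<psi> - fst p * sin \<psi>}"
    by (auto simp: halfspace_pair_def left_of_def)
  then show ?thesis
    by (simp only:) (intro open_Un open_Collect_conj open_Collect_less continuous_intros)
qed

section \<open>Null sets and local convergence\<close>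

lemma AE_lborel_if_negligible: "negligible {p. \<not> P p} \<Longrightarrow> AE p in lborel. P p"
  using eventually_ae_filter_negligible[of P] AE_completion_iff by blast

lemma AE_lborel_off_plane:
  fixes a b c d :: real
  assumes "(a, b, c) \<noteq> (0, 0, 0)"
  shows "AE p in lborel. a * fst p + b * fst (snd p) + c * snd (snd p) \<noteq> d"
proof (rule AE_lborel_if_negligible)
  have "(a, b, c) \<noteq> (0 :: heis)"
    using assms by (simp add: zero_prod_def)
  then have "negligible {p :: heis. (a, b, c) \<bullet> p = d}"
    by (intro negligible_hyperplane) simp
  then show "negligible {p :: heis. \<not> a * fst p + b * fst (snd p) + c * snd (snd p) \<noteq> d}"
    by (simp add: inner_prod_def add.assoc)
qed

lemma AE_lborel_off_parabolic:
  "AE p in lborel. snd (snd p) - fst p * fst (snd p) / 2 + \<beta> * (fst p)\<^sup>2 / 2 \<noteq> (0 :: real)"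
proof (rule AE_lborel_if_negligible)
  define g where "g q = (fst q, snd q, fst q * snd q / 2 - \<beta> * (fst q)\<^sup>2 / 2)"
    for q :: "real \<times> real"
  have "{p :: heis. \<not> snd (snd p) - fst p * fst (snd p) / 2 + \<beta> * (fst p)\<^sup>2 / 2 \<noteq> 0} = range g"
    by (auto simp: g_def image_iff algebra_simps intro!: exI[of _ "(fst _, fst (snd _))"])
  moreover have "g differentiable_on UNIV"
    unfolding g_def differentiable_on_def
    by (auto intro!: derivative_intros bounded_linear_imp_differentiable[OF bounded_linear_fst]
        bounded_linear_imp_differentiable[OF bounded_linear_snd])
  then have "negligible (range g)"
    by (intro negligible_differentiable_image_lowdim) auto
  ultimately show
    "negligible {p :: heis. \<not> snd (snd p) - fst p * fst (snd p) / 2 + \<beta> * (fst p)\<^sup>2 / 2 \<noteq> 0}"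
    by simp
qed

lemma emeasure_tendsto_zero_if_AE_eventually_notin:
  fixes B :: "real \<Rightarrow> 'a set"
  assumes B: "\<And>t. B t \<in> sets M" "\<And>t. B t \<subseteq> C"
    and C: "C \<in> sets M" "emeasure M C < \<infinity>"
    and AE: "AE p in M. eventually (\<lambda>t. p \<notin> B t) at_top"
  shows "((\<lambda>t. emeasure M (B t)) \<longlongrightarrow> 0) at_top"
proof -
  have "((\<lambda>t. \<integral>p. indicator (B t) p \<partial>M) \<longlongrightarrow> (\<integral>p. 0 \<partial>M :: real)) at_top"
  proof (rule integral_dominated_convergence_at_top[where w = "indicator C"])
    show "AE p in M. ((\<lambda>t. indicator (B t) p :: real) \<longlongrightarrow> 0) at_top"
    proof (rule AE_mp[OF AE], intro AE_I2 impI)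
      fix p
      assume "eventually (\<lambda>t. p \<notin> B t) at_top"
      then have "eventually (\<lambda>t. indicator (B t) p = (0 :: real)) at_top"
        by eventually_elim simp
      then show "((\<lambda>t. indicator (B t) p :: real) \<longlongrightarrow> 0) at_top"
        by (rule tendsto_eventually)
    qed
    show "\<forall>\<^sub>F t in at_top. AE p in M. norm (indicator (B t) p :: real) \<le> indicator C p"
      using B(2) by (intro always_eventually allI AE_I2) (auto simp: indicator_def)
  qed (use B C in auto)
  then have "((\<lambda>t. ennreal (measure M (B t))) \<longlongrightarrow> ennreal 0) at_top"
    using B(1) by (intro tendsto_ennrealI) (simp add: sets.Int_space_eq2)
  moreover have "emeasure M (B t) = ennreal (measure M (B t))" for t
    using emeasure_mono[OF B(2) C(1), of t] C(2) by (intro emeasure_eq_ennreal_measure) auto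
  ultimately show ?thesis
    by simp
qed

lemma local_conv_if_AE:
  assumes G: "\<And>t. G t \<in> sets borel" and H': "H' \<in> sets borel"
    and H: "AE p in lborel. p \<in> H \<longleftrightarrow> p \<in> H'"
    and conv: "AE p in lborel. eventually (\<lambda>t. p \<in> G t \<longleftrightarrow> p \<in> H') at_top"
  shows "local_conv G H"
  unfolding local_conv_def
proof (intro allI impI)
  fix C :: "heis set"
  assume "compact C"
  define B where "B t = ((G t - H') \<union> (H' - G t)) \<inter> C" for t
  have "C \<in> sets lborel"
    using \<open>compact C\<close> by (simp add: compact_imp_closed borel_closed)
  have B_sets: "B t \<in> sets lborel" for t
    using G H' \<open>C \<in> sets lborel\<close> by (auto simp: B_def)
  have "AE p in lborel. eventually (\<lambda>t. p \<notin> B t) at_top"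
    using conv by eventually_elim (erule eventually_mono, auto simp: B_def)
  then have B_lim: "((\<lambda>t. emeasure lborel (B t)) \<longlongrightarrow> 0) at_top"
    using B_sets \<open>C \<in> sets lborel\<close> emeasure_bounded_finite[OF compact_imp_bounded[OF \<open>compact C\<close>]]
    by (intro emeasure_tendsto_zero_if_AE_eventually_notin[where C = C]) (auto simp: B_def)
  obtain N where off_N: "\<And>p. p \<in> space lborel - N \<Longrightarrow> p \<in> H \<longleftrightarrow> p \<in> H'"
    and N: "N \<in> null_sets lborel"
    using AE_E3[OF H] by blast
  have "emeasure lborel (((G t - H) \<union> (H - G t)) \<inter> C) \<le> emeasure lborel (B t \<union> N)" for t
    using off_N B_sets N by (intro emeasure_mono) (auto simp: B_def)
  also have "emeasure lborel (B t \<union> N) = emeasure lborel (B t)" for t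
    using B_sets N by (rule emeasure_Un_null_set)
  finally show "((\<lambda>t. emeasure lborel (((G t - H) \<union> (H - G t)) \<inter> C)) \<longlongrightarrow> 0) at_top"
    by (intro tendsto_sandwich[OF _ _ tendsto_const B_lim] always_eventually) auto
qed

lemma open_epi_Y:
  assumes "continuous_on UNIV (\<lambda>(x, z). f x z)"
  shows "open (epi_Y f)"
proof -
  define g where "g p = (\<lambda>(x, z). f x z) (fst p, snd (snd p) - fst p * fst (snd p) / 2)"
    for p :: heis
  have "epi_Y f = {p. g p < fst (snd p)}"
    by (auto simp: epi_Y_eq g_def)
  moreover have "continuous_on UNIV g"
    unfolding g_def by (rule continuous_on_compose2[OF assms]) (auto intro!: continuous_intros)
  ultimately show ?thesis
    by (auto intro!: open_Collect_less continuous_intros)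
qed

lemma open_sdil_vimage_epi_Y:
  assumes "continuous_on UNIV (\<lambda>(x, z). f x z)"
  shows "open (sdil t -` epi_Y f)"
proof -
  have "sdil t = (\<lambda>p. (t * fst p, t * fst (snd p), t\<^sup>2 * snd (snd p)))"
    by (auto simp: sdil_def fun_eq_iff split: prod.splits)
  then have "continuous_on UNIV (sdil t)"
    by (simp add: continuous_intros)
  with open_epi_Y[OF assms] show ?thesis
    by (rule open_vimage)
qed

lemma sdil_mem_epi_Y_iff:
  assumes "0 < t"
  shows "sdil t (x, y, w) \<in> epi_Y f \<longleftrightarrow> f (t * x) (t\<^sup>2 * (w - x * y / 2)) / t < y"
proof -
  have "t\<^sup>2 * w - t * x * (t * y) / 2 = t\<^sup>2 * (w - x * y / 2)"
    by (simp add: power2_eq_square algebra_simps)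
  with assms show ?thesis
    by (simp add: sdil_def epi_Y_eq pos_divide_less_eq mult.commute)
qed

lemma eventually_sdil_mem_epi_Y_iff:
  fixes f :: "real \<Rightarrow> real \<Rightarrow> real"
  defines "S \<equiv> ruling_slopes f"
  assumes ruled: "ruled_fun f" and cont: "continuous_on UNIV (f 0)" and "x \<noteq> 0" and "w \<noteq> 0"
    and sup: "bdd_above S \<Longrightarrow> y \<noteq> Sup S * x \<and> w - x * y / 2 + Sup S * x\<^sup>2 / 2 \<noteq> 0"
    and inf: "bdd_below S \<Longrightarrow> y \<noteq> Inf S * x \<and> w - x * y / 2 + Inf S * x\<^sup>2 / 2 \<noteq> 0"
  shows "eventually (\<lambda>t. sdil t (x, y, w) \<in> epi_Y f
    \<longleftrightarrow> (x, y, w) \<in> halfspace_pair (angle_sup S) (angle_inf S)) at_top"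
proof -
  define z where "z = w - x * y / 2"
  have "((\<lambda>t. f (t * x) (t\<^sup>2 * z) / t) \<longlongrightarrow> blowup_fun S x z) at_top"
    using sup inf unfolding S_def z_def by (intro tendsto_blowup_fun ruled cont \<open>x \<noteq> 0\<close>) auto
  moreover have "y \<noteq> blowup_fun S x z"
    using sup inf \<open>x \<noteq> 0\<close> \<open>w \<noteq> 0\<close> by (auto simp: blowup_fun_def z_def field_simps)
  ultimately have "eventually (\<lambda>t. f (t * x) (t\<^sup>2 * z) / t < y \<longleftrightarrow> blowup_fun S x z < y) at_top"
    by (rule eventually_less_iff_if_tendsto)
  with eventually_gt_at_top[of 0]
  have "eventually (\<lambda>t. 0 < t \<and> (f (t * x) (t\<^sup>2 * z) / t < y \<longleftrightarrow> blowup_fun S x z < y)) at_top"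
    by (rule eventually_conj)
  moreover have "blowup_fun S x z < y \<longleftrightarrow> (x, y, w) \<in> halfspace_pair (angle_sup S) (angle_inf S)"
    unfolding z_def S_def
      by (intro less_blowup_fun_iff ruling_slopes_nonempty ruled \<open>x \<noteq> 0\<close> \<open>w \<noteq> 0\<close>)
  ultimately show ?thesis
    by (auto simp: sdil_mem_epi_Y_iff z_def elim: eventually_mono)
qed

lemma AE_eventually_sdil_vimage_epi_Y_iff:
  fixes f :: "real \<Rightarrow> real \<Rightarrow> real"
  defines "S \<equiv> ruling_slopes f"
  assumes ruled: "ruled_fun f" and cont: "continuous_on UNIV (\<lambda>(x, z). f x z)"
  shows "AE p in lborel. eventually (\<lambda>t. p \<in> sdil t -` epi_Y f
    \<longleftrightarrow> p \<in> halfspace_pair (angle_sup S) (angle_inf S)) at_top"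
proof -
  have "continuous_on UNIV (\<lambda>c. (\<lambda>(x, z). f x z) (0, c))"
    by (rule continuous_on_compose2[OF cont]) (auto intro!: continuous_intros)
  then have cont\<^sub>0: "continuous_on UNIV (f 0)"
    by simp
  have "AE p in lborel. fst p \<noteq> 0 \<and> snd (snd p) \<noteq> 0
      \<and> fst (snd p) \<noteq> Sup S * fst p \<and> fst (snd p) \<noteq> Inf S * fst p
      \<and> snd (snd p) - fst p * fst (snd p) / 2 + Sup S * (fst p)\<^sup>2 / 2 \<noteq> 0
      \<and> snd (snd p) - fst p * fst (snd p) / 2 + Inf S * (fst p)\<^sup>2 / 2 \<noteq> 0"
    using AE_lborel_off_plane[of 1 0 0 0] AE_lborel_off_plane[of 0 0 1 0]
      AE_lborel_off_plane[of "- Sup S" 1 0 0] AE_lborel_off_plane[of "- Inf S" 1 0 0]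
      AE_lborel_off_parabolic[of "Sup S"] AE_lborel_off_parabolic[of "Inf S"]
    by simp
  then show ?thesis
  proof eventually_elim
    case (elim p)
    obtain x y w where "p = (x, y, w)"
      by (cases p)
    with elim eventually_sdil_mem_epi_Y_iff[OF ruled cont\<^sub>0, of x w y] show ?case
      by (simp add: S_def)
  qed
qed

lemma AE_mem_rot_BP_tan_iff:
  assumes "0 \<le> \<alpha>" and "\<alpha> < pi / 2"
  shows "AE p in lborel. p \<in> rot \<theta> ` BP (tan \<alpha>) \<longleftrightarrow> p \<in> halfspace_pair (\<alpha> + \<theta>) (- \<alpha> + \<theta>)"
proof -
  have "0 \<le> tan \<alpha>"
    using assms tan_gt_zero[of \<alpha>] by (cases "\<alpha> = 0") auto
  have "arctan (tan \<alpha>) = \<alpha>"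
    using assms pi_gt_zero by (intro arctan_tan) linarith+
  have "(cos \<theta>, sin \<theta>, 0) \<noteq> (0, 0, 0 :: real)"
    using sin_cos_squared_add[of \<theta>] by (auto simp: power2_eq_square)
  then have "AE p in lborel. cos \<theta> * fst p + sin \<theta> * fst (snd p) + 0 * snd (snd p) \<noteq> 0"
    by (rule AE_lborel_off_plane)
  moreover have "AE p in lborel. snd (snd (p :: heis)) \<noteq> 0"
    using AE_lborel_off_plane[of 0 0 1 0] by simp
  ultimately show ?thesis
  proof eventually_elim
    case (elim p)
    obtain x y w where p: "p = (x, y, w)"
      by (cases p)
    have "rot (- \<theta>) p \<in> BP (tan \<alpha>) \<longleftrightarrow> rot (- \<theta>) p \<in> halfspace_pair \<alpha> (- \<alpha>)"
      using mem_BP_ereal_iff[OF \<open>0 \<le> tan \<alpha>\<close>, of "x * cos \<theta> + y * sin \<theta>" w] elim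
        \<open>arctan (tan \<alpha>) = \<alpha>\<close> by (simp add: p rot_def algebra_simps)
    then show ?case
      by (metis mem_rot_image_iff rot_image_halfspace_pair)
  qed
qed

lemma ex_rot_BP_AE_eq_halfspace_pair:
  assumes "- (pi / 2) \<le> \<psi>" and "\<psi> \<le> \<phi>" and "\<phi> \<le> pi / 2"
  shows "\<exists>u \<theta>. 0 \<le> u \<and> (AE p in lborel. p \<in> rot \<theta> ` BP u \<longleftrightarrow> p \<in> halfspace_pair \<phi> \<psi>)
    \<and> (u = 0 \<longrightarrow> \<phi> = \<psi>)"
proof (cases "\<phi> = pi / 2 \<and> \<psi> = - (pi / 2)")
  case True
  then have \<phi>: "\<phi> = pi / 2" and \<psi>: "\<psi> = - (pi / 2)"
    by simp_all
  have "rot 0 ` BP \<infinity> = halfspace_pair \<phi> \<psi>"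
    unfolding \<phi> \<psi> by (simp add: BP_infinity rot_image_halfspace_pair)
  then show ?thesis
    by (intro exI[of _ \<infinity>] exI[of _ 0]) simp
next
  case False
  define \<alpha> \<theta> where "\<alpha> = (\<phi> - \<psi>) / 2" and "\<theta> = (\<phi> + \<psi>) / 2"
  have "0 \<le> \<alpha>" and "\<alpha> < pi / 2"
    using assms False by (auto simp: \<alpha>_def)
  moreover have "\<alpha> + \<theta> = \<phi>" and "- \<alpha> + \<theta> = \<psi>"
    by (simp_all add: \<alpha>_def \<theta>_def field_simps)
  moreover have "\<phi> = \<psi>" if "tan \<alpha> = 0"
  proof (rule ccontr)
    assume "\<phi> \<noteq> \<psi>"
    with \<open>0 \<le> \<alpha>\<close> have "0 < \<alpha>"
      by (auto simp: \<alpha>_def)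
    with tan_gt_zero[OF _ \<open>\<alpha> < pi / 2\<close>] that show False
      by simp
  qed
  ultimately show ?thesis
    using AE_mem_rot_BP_tan_iff[of \<alpha> \<theta>] tan_gt_zero[of \<alpha>]
    by (intro exI[of _ "ereal (tan \<alpha>)"] exI[of _ \<theta>]) (cases "\<alpha> = 0"; auto)
qed

lemma ex_rot_BP_AE_eq_halfspace_pair_of_slopes:
  fixes S :: "real set"
  assumes "S \<noteq> {}"
  shows "\<exists>u \<theta>. 0 \<le> u
    \<and> (AE p in lborel. p \<in> rot \<theta> ` BP u \<longleftrightarrow> p \<in> halfspace_pair (angle_sup S) (angle_inf S))
    \<and> (u = 0 \<longrightarrow> (\<exists>\<beta>. S = {\<beta>}))"
proof -
  have "- (pi / 2) \<le> angle_inf S" and "angle_sup S \<le> pi / 2"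
    using arctan_lbound arctan_ubound by (auto simp: angle_inf_def angle_sup_def less_imp_le)
  then show ?thesis
    using ex_rot_BP_AE_eq_halfspace_pair[OF _ angle_inf_le_angle_sup[OF assms]]
      angle_sup_eq_angle_inf_imp_singleton[OF assms] by blast
qed

theorem lemma4p1:
  fixes f :: "real \<Rightarrow> real \<Rightarrow> real"
  assumes "continuous_on UNIV (\<lambda>(x, z). f x z)"
    and "ruled_surface (graph_Y f)"
  shows "\<exists>u \<theta>. u \<ge> 0 \<and>
           local_conv (\<lambda>t. sdil t -` epi_Y f) (rot \<theta> ` BP u) \<and>
           (u = 0 \<longrightarrow> (\<exists>a b c. (a, b) \<noteq> (0::real, 0::real) \<and>
               graph_Y f = {(x, y, z). a * x + b * y = c}))"
proof -
  have ruled: "ruled_fun f"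
    using assms(2) by (rule ruled_fun_graph)
  define S where "S = ruling_slopes f"
  obtain u \<theta> where "0 \<le> u"
    and BP: "AE p in lborel. p \<in> rot \<theta> ` BP u \<longleftrightarrow> p \<in> halfspace_pair (angle_sup S) (angle_inf S)"
    and single_slope: "u = 0 \<Longrightarrow> \<exists>\<beta>. S = {\<beta>}"
    using ex_rot_BP_AE_eq_halfspace_pair_of_slopes[OF ruling_slopes_nonempty[OF ruled]]
    unfolding S_def by blast
  have "local_conv (\<lambda>t. sdil t -` epi_Y f) (rot \<theta> ` BP u)"
    using open_sdil_vimage_epi_Y[OF assms(1)] open_halfspace_pair BP
      AE_eventually_sdil_vimage_epi_Y_iff[OF ruled assms(1)]
    by (intro local_conv_if_AE) (auto simp: S_def)
  moreover have "\<exists>a b c. (a, b) \<noteq> (0::real, 0::real) \<and> graph_Y f = {(x, y, z). a * x + b * y = c}"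
    if "u = 0"
  proof -
    from single_slope[OF \<open>u = 0\<close>] obtain \<beta> where "ruling_slopes f = {\<beta>}"
      by (auto simp: S_def)
    then show ?thesis
      using graph_Y_eq_plane_if_single_slope[OF ruled]
        by (intro exI[of _ "- \<beta>"] exI[of _ 1] exI) simp
  qed
  ultimately show ?thesis
    using \<open>0 \<le> u\<close> by blast
qed

end
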